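(* Let $n\ge 1$, $\theta^*\in\mathbb{R}^n$, and let $\phi:\mathbb{R}_{\ge0}\to\mathbb{R}^n$ be piecewise continuous and persistently exciting: there exist $M>0$, $T>0$, $\delta>0$ with $|\phi(t)|\le M$ for all $t\ge0$ and $\int_t^{t+T}\phi(s)\phi^T(s)\,ds\ge \delta I_n$ for all $t\ge 0$. Let $\beta,\gamma,\mu>0$ with $\beta\ge 2\gamma/\mu$, and set $\mathcal{N}_t:=1+\mu\,\phi^T(t)\phi(t)$. Consider the system in $x=(\theta,\vartheta)\in\mathbb{R}^n\times\mathbb{R}^n$ $$\dot\theta=-\beta(\theta-\vartheta),\qquad \dot\vartheta=-\frac{\gamma}{\mathcal{N}_t}\,\phi(t)\phi^T(t)(\theta-\theta^* ).$$ Then the point $(\theta^*,\theta^* )$ is uniformly globally asymptotically stable for this system. *)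

theory Defs
  imports "HOL-Analysis.Analysis"
begin

definition piecewise_continuous :: "(real \<Rightarrow> 'a::real_normed_vector) \<Rightarrow> bool" where
  "piecewise_continuous \<phi> \<longleftrightarrow>
     (\<exists>S. (\<forall>b. finite (S \<inter> {0..b})) \<and>
          (\<forall>t \<in> {0..} - S. continuous (at t within {0..}) \<phi>) \<and>
          (\<forall>s \<in> S. (s > 0 \<longrightarrow> (\<exists>l. (\<phi> \<longlongrightarrow> l) (at_left s))) \<and>
                    (\<exists>l. (\<phi> \<longlongrightarrow> l) (at_right s))))"

definition outer :: "real ^ 'n \<Rightarrow> real ^ 'n ^ 'n" where
  "outer v = (\<chi> i j. v $ i * v $ j)"

definition mat_ge :: "real ^ 'n ^ 'n \<Rightarrow> real ^ 'n ^ 'n \<Rightarrow> bool" where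
  "mat_ge A B \<longleftrightarrow> (\<forall>v. v \<bullet> ((A - B) *v v) \<ge> 0)"

definition persistently_exciting :: "(real \<Rightarrow> real ^ 'n) \<Rightarrow> bool" where
  "persistently_exciting \<phi> \<longleftrightarrow>
     (\<exists>M T \<delta>. M > 0 \<and> T > 0 \<and> \<delta> > 0 \<and>
        (\<forall>t \<ge> 0. norm (\<phi> t) \<le> M) \<and>
        (\<forall>t \<ge> 0. mat_ge (integral {t..t+T} (\<lambda>s. outer (\<phi> s))) (\<delta> *\<^sub>R mat 1)))"

definition classK :: "(real \<Rightarrow> real) \<Rightarrow> bool" where
  "classK \<alpha> \<longleftrightarrow> continuous_on {0..} \<alpha> \<and> strict_mono_on {0..} \<alpha> \<and> \<alpha> 0 = 0"

definition classKL :: "(real \<Rightarrow> real \<Rightarrow> real) \<Rightarrow> bool" where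
  "classKL \<beta> \<longleftrightarrow> continuous_on ({0..} \<times> {0..}) (\<lambda>(r,s). \<beta> r s) \<and>
     (\<forall>s \<ge> 0. classK (\<lambda>r. \<beta> r s)) \<and>
     (\<forall>r \<ge> 0. antimono_on {0..} (\<lambda>s. \<beta> r s) \<and> ((\<lambda>s. \<beta> r s) \<longlongrightarrow> 0) at_top)"

definition is_solution :: "(real \<Rightarrow> 'a \<Rightarrow> 'a::euclidean_space) \<Rightarrow> real \<Rightarrow> (real \<Rightarrow> 'a) \<Rightarrow> bool" where
  "is_solution f t0 x \<longleftrightarrow>
     (\<forall>t \<ge> t0. ((\<lambda>s. f s (x s)) has_integral (x t - x t0)) {t0..t})"

definition UGAS :: "(real \<Rightarrow> 'a \<Rightarrow> 'a::euclidean_space) \<Rightarrow> 'a \<Rightarrow> bool" where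
  "UGAS f xe \<longleftrightarrow>
     (\<exists>\<beta>. classKL \<beta> \<and>
        (\<forall>t0 x. t0 \<ge> 0 \<longrightarrow> is_solution f t0 x \<longrightarrow>
           (\<forall>t \<ge> t0. norm (x t - xe) \<le> \<beta> (norm (x t0 - xe)) (t - t0))))"

definition estimator_sys ::
  "real \<Rightarrow> real \<Rightarrow> real \<Rightarrow> (real \<Rightarrow> real ^ 'n) \<Rightarrow> real ^ 'n
     \<Rightarrow> real \<Rightarrow> ((real ^ 'n) \<times> (real ^ 'n)) \<Rightarrow> ((real ^ 'n) \<times> (real ^ 'n))" where
  "estimator_sys \<beta> \<gamma> \<mu> \<phi> \<theta>s t z =
     (let \<theta> = fst z; \<eta> = snd z; N = 1 + \<mu> * (\<phi> t \<bullet> \<phi> t) in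
       (- \<beta> *\<^sub>R (\<theta> - \<eta>),
        - (\<gamma> / N) *\<^sub>R (outer (\<phi> t) *v (\<theta> - \<theta>s))))"

end

theory Submission
  imports Defs "HOL-Real_Asymp.Real_Asymp"
begin

text \<open>Write \<open>z = \<vartheta> - \<theta>\<^sup>*\<close> and \<open>w = \<theta> - \<vartheta>\<close> and take the Lyapunov function
\<open>V = |z|\<^sup>2 + |w|\<^sup>2\<close>, which is equivalent to the squared distance to the equilibrium. Thanks to
\<open>\<beta> \<ge> 2\<gamma>/\<mu>\<close> the cross term \<open>\<phi>\<^sup>T w\<close> in \<open>V'\<close> is absorbed, giving \<open>V' \<le> -c h\<close> with
\<open>h = |w|\<^sup>2 + (\<phi>\<^sup>T z)\<^sup>2\<close>. Over a window \<open>[t, t+T]\<close> the dissipated amount \<open>I = \<integral>h\<close> controls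
\<open>|w|\<^sup>2\<close> directly, and it controls \<open>|z(t)|\<^sup>2\<close> through persistency of excitation, because
\<open>|z'|\<^sup>2 \<le> C h\<close> keeps \<open>z\<close> nearly constant on the window. Hence \<open>T V(t+T) \<le> K I\<close>, and
together with \<open>V(t+T) \<le> V(t) - c I\<close> this is a contraction \<open>V(t+T) \<le> K/(K+cT) V(t)\<close>, which
iterates to a uniform exponential bound. Below, \<open>c\<close>, \<open>C\<close>, \<open>K\<close> are \<open>dissipation\<close>,
\<open>drift_bound\<close> and \<open>window_const\<close>.\<close>

lemma integrable_on_bounded_continuous_off_finite:
  fixes f :: "real \<Rightarrow> real"
  assumes F: "finite F" and cont: "continuous_on ({a..b} - F) f"
    and bound: "\<And>s. s \<in> {a..b} \<Longrightarrow> \<bar>f s\<bar> \<le> B"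
  shows "f integrable_on {a..b}"
proof -
  have neg: "negligible (({a..b} - F - {a..b}) \<union> ({a..b} - ({a..b} - F)))"
    by (rule negligible_subset[OF negligible_finite[OF F]]) auto
  have neg': "negligible (({a..b} - ({a..b} - F)) \<union> (({a..b} - F) - {a..b}))"
    by (rule negligible_subset[OF negligible_finite[OF F]]) auto
  have meas: "{a..b} - F \<in> sets lebesgue"
    by (meson fmeasurableD lmeasurable_interval(1) lmeasurable_negligible_symdiff neg')
  have "(\<lambda>_. B) integrable_on {a..b}"
    by (intro integrable_continuous_interval continuous_intros)
  then have "(\<lambda>_. B) integrable_on ({a..b} - F)"
    by (rule integrable_spike_set_eq[OF neg', THEN iffD1])
  then have "f integrable_on ({a..b} - F)"
    by (rule measurable_bounded_by_integrable_imp_integrable_real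
        [OF continuous_imp_measurable_on_sets_lebesgue[OF cont meas]])
      (use bound meas in auto)
  then show ?thesis
    by (rule integrable_spike_set_eq[OF neg, THEN iffD1])
qed

lemma integral_square_le:
  fixes f :: "real \<Rightarrow> real"
  assumes f: "f integrable_on {a..b}" and f2: "(\<lambda>s. (f s)\<^sup>2) integrable_on {a..b}"
    and ab: "a \<le> b"
  shows "(integral {a..b} f)\<^sup>2 \<le> (b - a) * integral {a..b} (\<lambda>s. (f s)\<^sup>2)"
proof (cases "a = b")
  case False
  define F1 where "F1 = integral {a..b} f"
  define F2 where "F2 = integral {a..b} (\<lambda>s. (f s)\<^sup>2)"
  define d where "d = b - a"
  define r where "r = F1 / d"
  have d: "d > 0" using ab False d_def by simp
  \<comment> \<open>integrate \<open>(f - r)\<^sup>2 \<ge> 0\<close> with \<open>r\<close> the mean value of \<open>f\<close>\<close>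
  have "((\<lambda>s. (f s)\<^sup>2 - 2 * r * f s + r\<^sup>2) has_integral (F2 - 2 * r * F1 + d * r\<^sup>2)) {a..b}"
    unfolding F1_def F2_def d_def
    using has_integral_add[OF has_integral_diff[OF integrable_integral[OF f2]
          has_integral_mult_right[OF integrable_integral[OF f], of "2 * r"]]
        has_integral_const_real[of "r\<^sup>2" a b]] ab
    by simp
  moreover have "0 \<le> (f s)\<^sup>2 - 2 * r * f s + r\<^sup>2" for s
  proof -
    have "(f s)\<^sup>2 - 2 * r * f s + r\<^sup>2 = (f s - r)\<^sup>2" by (simp add: power2_eq_square algebra_simps)
    then show ?thesis by simp
  qed
  ultimately have "0 \<le> F2 - 2 * r * F1 + d * r\<^sup>2" by (rule has_integral_nonneg)
  also have "\<dots> = F2 - F1\<^sup>2 / d"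
    unfolding r_def using d by (simp add: field_simps power2_eq_square)
  finally have "F1\<^sup>2 \<le> d * F2" using d by (simp add: field_simps)
  then show ?thesis unfolding F1_def F2_def d_def .
qed simp

lemma square_add_le: "((a::real) + b)\<^sup>2 \<le> 2 * a\<^sup>2 + 2 * b\<^sup>2"
proof -
  have "2 * a\<^sup>2 + 2 * b\<^sup>2 - (a + b)\<^sup>2 = (a - b)\<^sup>2" by (simp add: power2_eq_square algebra_simps)
  then show ?thesis by (metis diff_ge_0_iff_ge zero_le_power2)
qed

lemma inner_self_le_split: "(u::'a::real_inner) \<bullet> u \<le> 2 * (v \<bullet> v) + 2 * ((u - v) \<bullet> (u - v))"
proof -
  have "2 * (v \<bullet> v) + 2 * ((u - v) \<bullet> (u - v)) - u \<bullet> u = (2 *\<^sub>R v - u) \<bullet> (2 *\<^sub>R v - u)"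
    by (simp add: inner_diff_left inner_diff_right inner_commute algebra_simps)
  then show ?thesis by (metis diff_ge_0_iff_ge inner_ge_zero)
qed

lemma outer_mult_vec: "outer v *v u = (v \<bullet> u) *\<^sub>R v"
  by (simp add: outer_def vec_eq_iff matrix_vector_mult_def inner_vec_def sum_distrib_left
      sum_distrib_right mult.commute mult.left_commute)

lemma inner_outer_mult_vec: "u \<bullet> (outer v *v u) = (v \<bullet> u)\<^sup>2"
  by (simp add: outer_mult_vec power2_eq_square inner_commute)

lemma mat_ge_scaled_identity_quadratic:
  fixes A :: "real^'n^'n"
  assumes "mat_ge A (d *\<^sub>R mat 1)"
  shows "d * (v \<bullet> v) \<le> v \<bullet> (A *v v)"
proof -
  have "(A - d *\<^sub>R mat 1) *v v = A *v v - d *\<^sub>R v"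
    by (simp add: matrix_vector_mult_diff_rdistrib scaleR_matrix_vector_assoc[symmetric])
  then show ?thesis
    using assms unfolding mat_ge_def by (metis diff_ge_0_iff_ge inner_diff_right inner_scaleR_right)
qed

lemma bounded_linear_quadratic_form: "bounded_linear (\<lambda>A::real^'n^'n. v \<bullet> (A *v v))"
proof -
  have "linear (\<lambda>A::real^'n^'n. v \<bullet> (A *v v))"
    by (rule linearI) (simp_all add: matrix_vector_mult_add_rdistrib inner_add_right
        scaleR_matrix_vector_assoc[symmetric])
  then show ?thesis by (simp add: linear_conv_bounded_linear)
qed

lemma continuous_bounded_on_cball_Times:
  fixes H :: "'a::euclidean_space \<times> 'b::euclidean_space \<Rightarrow> real"
  assumes "continuous_on UNIV H"
  obtains B where "\<And>p q. norm p \<le> r \<Longrightarrow> norm q \<le> r' \<Longrightarrow> \<bar>H (p, q)\<bar> \<le> B"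
proof -
  have "compact (H ` (cball 0 r \<times> cball 0 r'))"
    by (intro compact_continuous_image continuous_on_subset[OF assms] compact_Times) auto
  then obtain B where "\<forall>y \<in> H ` (cball 0 r \<times> cball 0 r'). norm y \<le> B"
    using compact_imp_bounded bounded_iff by metis
  then show ?thesis by (intro that[of B]) auto
qed

lemma classKL_exponential:
  fixes k a :: real
  assumes k: "k > 0" and a: "a > 0"
  shows "classKL (\<lambda>r s. k * r * exp (- (a * s)))"
  unfolding classKL_def classK_def
proof (intro conjI allI impI)
  show "continuous_on ({0..} \<times> {0..}) (\<lambda>(r, s). k * r * exp (- (a * s)))"
    unfolding case_prod_unfold by (intro continuous_intros)
  fix s :: real
  show "continuous_on {0..} (\<lambda>r. k * r * exp (- (a * s)))" by (intro continuous_intros)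
  show "strict_mono_on {0..} (\<lambda>r. k * r * exp (- (a * s)))"
    by (rule strict_mono_onI) (use k in simp)
  show "k * 0 * exp (- (a * s)) = 0" by simp
next
  fix r :: real assume r: "0 \<le> r"
  show "antimono_on {0..} (\<lambda>s. k * r * exp (- (a * s)))"
    by (rule monotone_onI) (use k r a in \<open>auto intro!: mult_left_mono\<close>)
  show "((\<lambda>s. k * r * exp (- (a * s))) \<longlongrightarrow> 0) at_top"
    using a by real_asymp
qed

lemma exponential_decay_of_periodic_contraction:
  fixes V :: "real \<Rightarrow> real"
  assumes T: "T > 0" and L: "L \<ge> 0" and V0: "0 \<le> V t0"
    and antimono: "\<And>a b. t0 \<le> a \<Longrightarrow> a \<le> b \<Longrightarrow> V b \<le> V a"
    and contraction: "\<And>t. t0 \<le> t \<Longrightarrow> V (t + T) \<le> exp (- L) * V t"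
    and t: "t0 \<le> t"
  shows "V t \<le> exp L * exp (- (L * ((t - t0) / T))) * V t0"
proof -
  have iterate: "V (t0 + real k * T) \<le> exp (- (L * real k)) * V t0" for k
  proof (induction k)
    case (Suc k)
    have "V (t0 + real (Suc k) * T) = V ((t0 + real k * T) + T)" by (simp add: algebra_simps)
    also have "\<dots> \<le> exp (- L) * V (t0 + real k * T)" using T by (intro contraction) simp
    also have "\<dots> \<le> exp (- L) * (exp (- (L * real k)) * V t0)" using Suc by simp
    also have "\<dots> = exp (- (L * real (Suc k))) * V t0"
      by (simp add: mult.assoc[symmetric] exp_add[symmetric] algebra_simps)
    finally show ?case .
  qed simp
  define y where "y = (t - t0) / T"
  define k where "k = nat \<lfloor>y\<rfloor>"
  have y0: "y \<ge> 0" unfolding y_def using t T by simp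
  have k: "real k \<le> y" "y < real k + 1" unfolding k_def using y0 by linarith+
  have "real k * T \<le> y * T" using k T by (simp add: mult_right_mono)
  then have "t0 + real k * T \<le> t" unfolding y_def using T by simp
  then have "V t \<le> V (t0 + real k * T)" using T by (intro antimono) auto
  also have "\<dots> \<le> exp (- (L * real k)) * V t0" by (rule iterate)
  also have "\<dots> \<le> exp (L - L * y) * V t0"
  proof (rule mult_right_mono)
    have "L * (y - real k) \<le> L * 1" using k L by (intro mult_left_mono) auto
    then show "exp (- (L * real k)) \<le> exp (L - L * y)" by (simp add: algebra_simps)
  qed (rule V0)
  also have "\<dots> = exp L * exp (- (L * y)) * V t0" by (simp add: exp_diff exp_minus field_simps)
  finally show ?thesis unfolding y_def .
qed

lemma sum_squares_le_3_times_split: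
  fixes u v :: "'a::real_inner"
  shows "u \<bullet> u + v \<bullet> v \<le> 3 * (v \<bullet> v + (u - v) \<bullet> (u - v))"
    and "v \<bullet> v + (u - v) \<bullet> (u - v) \<le> 3 * (u \<bullet> u + v \<bullet> v)"
proof -
  have u: "u \<bullet> u \<le> 2 * (v \<bullet> v) + 2 * ((u - v) \<bullet> (u - v))" by (rule inner_self_le_split)
  have "(u - v) \<bullet> (u - v) \<le> 2 * (u \<bullet> u) + 2 * ((u - v - u) \<bullet> (u - v - u))"
    by (rule inner_self_le_split)
  then have uv: "(u - v) \<bullet> (u - v) \<le> 2 * (u \<bullet> u) + 2 * (v \<bullet> v)" by simp
  have "0 \<le> u \<bullet> u" "0 \<le> v \<bullet> v" "0 \<le> (u - v) \<bullet> (u - v)" by simp_all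
  with u uv show "u \<bullet> u + v \<bullet> v \<le> 3 * (v \<bullet> v + (u - v) \<bullet> (u - v))" by argo
  from \<open>0 \<le> u \<bullet> u\<close> \<open>0 \<le> v \<bullet> v\<close> uv
  show "v \<bullet> v + (u - v) \<bullet> (u - v) \<le> 3 * (u \<bullet> u + v \<bullet> v)" by argo
qed

locale estimator_setting =
  fixes \<phi> :: "real \<Rightarrow> real^'n" and \<theta>s :: "real^'n" and \<beta> \<gamma> \<mu> M T \<delta> :: real
    and S :: "real set"
  assumes \<beta>: "\<beta> > 0" and \<gamma>: "\<gamma> > 0" and \<mu>: "\<mu> > 0" and \<beta>_ge: "2 * \<gamma> / \<mu> \<le> \<beta>"
    and M: "M > 0" and T: "T > 0" and \<delta>: "\<delta> > 0"
    and \<phi>_bounded: "\<And>t. t \<ge> 0 \<Longrightarrow> norm (\<phi> t) \<le> M"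
    and excitation: "\<And>t. t \<ge> 0 \<Longrightarrow> mat_ge (integral {t..t+T} (\<lambda>s. outer (\<phi> s))) (\<delta> *\<^sub>R mat 1)"
    and S_finite: "\<And>b. finite (S \<inter> {0..b})"
    and \<phi>_continuous: "\<And>t. t \<ge> 0 \<Longrightarrow> t \<notin> S \<Longrightarrow> continuous (at t within {0..}) \<phi>"
begin

lemma normaliser_pos: "1 + \<mu> * (v \<bullet> v) > 0"
  using \<mu> by (simp add: add_pos_nonneg)

lemma normaliser_nonzero: "1 + \<mu> * (v \<bullet> v) \<noteq> 0"
  using normaliser_pos[of v] by linarith

lemma inner_\<phi>_le: "s \<ge> 0 \<Longrightarrow> \<phi> s \<bullet> \<phi> s \<le> M\<^sup>2"
  using \<phi>_bounded[of s] by (metis norm_ge_zero power2_norm_eq_inner power_mono)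

lemma outer_integrable:
  assumes "t \<ge> 0"
  shows "(\<lambda>s. outer (\<phi> s)) integrable_on {t..t+T}"
proof (rule ccontr)
  \<comment> \<open>otherwise the integral is \<open>0\<close>, which cannot dominate \<open>\<delta> I\<close>\<close>
  assume "\<not> ?thesis"
  then have "integral {t..t+T} (\<lambda>s. outer (\<phi> s)) = 0" by (rule not_integrable_integral)
  then have "mat_ge 0 (\<delta> *\<^sub>R mat 1 :: real^'n^'n)" using excitation[OF assms] by simp
  from mat_ge_scaled_identity_quadratic[OF this, of "axis undefined 1"] show False
    using \<delta> by simp
qed

lemma excitation_quadratic:
  assumes "t \<ge> 0"
  shows "(\<lambda>s. (\<phi> s \<bullet> v)\<^sup>2) integrable_on {t..t+T}"
    and "\<delta> * (v \<bullet> v) \<le> integral {t..t+T} (\<lambda>s. (\<phi> s \<bullet> v)\<^sup>2)"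
proof -
  have eq: "(\<lambda>s. (\<phi> s \<bullet> v)\<^sup>2) = (\<lambda>A. v \<bullet> (A *v v)) \<circ> (\<lambda>s. outer (\<phi> s))"
    by (simp add: o_def inner_outer_mult_vec)
  show "(\<lambda>s. (\<phi> s \<bullet> v)\<^sup>2) integrable_on {t..t+T}"
    unfolding eq by (rule integrable_linear[OF outer_integrable[OF assms] bounded_linear_quadratic_form])
  show "\<delta> * (v \<bullet> v) \<le> integral {t..t+T} (\<lambda>s. (\<phi> s \<bullet> v)\<^sup>2)"
    unfolding eq integral_linear[OF outer_integrable[OF assms] bounded_linear_quadratic_form]
    using mat_ge_scaled_identity_quadratic[OF excitation[OF assms]] by simp
qed

lemma \<phi>_continuous_on:
  assumes "0 \<le> a"
  shows "continuous_on ({a..b} - S \<inter> {0..b}) \<phi>"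
  unfolding continuous_on_eq_continuous_within
proof
  fix s assume "s \<in> {a..b} - S \<inter> {0..b}"
  then show "continuous (at s within ({a..b} - S \<inter> {0..b})) \<phi>"
    using \<phi>_continuous[of s] assms by (auto intro: continuous_within_subset)
qed

lemma fundamental_theorem_of_calculus_off_S:
  fixes f f' :: "real \<Rightarrow> 'a::banach"
  assumes "t0 \<ge> 0" "t0 \<le> a" "a \<le> b" and "continuous_on {a..b} f"
    and "\<And>s. t0 < s \<Longrightarrow> s \<notin> S \<Longrightarrow> (f has_vector_derivative f' s) (at s)"
  shows "(f' has_integral (f b - f a)) {a..b}"
  by (rule fundamental_theorem_of_calculus_interior_strong[OF S_finite[of b]])
    (use assms in auto)

definition "dissipation = min \<beta> (2 * \<gamma> / (1 + \<mu> * M\<^sup>2))"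
definition "drift_bound = 2 * \<gamma>\<^sup>2 * M\<^sup>2 * (1 + M\<^sup>2)"
definition "window_const = 2 * T * (2 + 2 * M\<^sup>2 * T\<^sup>2 * drift_bound) / \<delta> + 2 * T\<^sup>2 * drift_bound + 1"
definition "contraction_exponent = ln ((window_const + dissipation * T) / window_const)"

lemma dissipation_pos: "dissipation > 0"
  using \<beta> \<gamma> \<mu> unfolding dissipation_def by (simp add: add_pos_nonneg)

lemma drift_bound_nonneg: "drift_bound \<ge> 0"
  unfolding drift_bound_def by simp

lemma window_const_pos: "window_const > 0"
  unfolding window_const_def using T \<delta> drift_bound_nonneg by (simp add: add_pos_nonneg)

lemma contraction_exponent_pos: "contraction_exponent > 0"
proof -
  have "(window_const + dissipation * T) / window_const > 1"
    using window_const_pos dissipation_pos T by (simp add: field_simps)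
  then show ?thesis unfolding contraction_exponent_def by (rule ln_gt_zero)
qed

lemma exp_minus_contraction_exponent:
  "exp (- contraction_exponent) = window_const / (window_const + dissipation * T)"
proof -
  have "(window_const + dissipation * T) / window_const > 0"
    using window_const_pos dissipation_pos T by (simp add: add_pos_pos)
  then show ?thesis unfolding contraction_exponent_def by (simp add: exp_minus)
qed

end

locale estimator_solution = estimator_setting +
  fixes t0 :: real and x :: "real \<Rightarrow> (real^'n) \<times> (real^'n)"
  assumes t0: "t0 \<ge> 0" and solution: "is_solution (estimator_sys \<beta> \<gamma> \<mu> \<phi> \<theta>s) t0 x"
begin

text \<open>\<open>zd\<close>, \<open>wd\<close>, \<open>Vd\<close> are the derivatives of \<open>z\<close>, \<open>w\<close>, \<open>V\<close> wherever \<open>\<phi>\<close> is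
continuous; \<open>h\<close> is the quantity dissipated by \<open>V\<close>.\<close>

definition "z s = snd (x s) - \<theta>s"
definition "w s = fst (x s) - snd (x s)"
definition "zd s = (- (\<gamma> / (1 + \<mu> * (\<phi> s \<bullet> \<phi> s))) * (\<phi> s \<bullet> (w s + z s))) *\<^sub>R \<phi> s"
definition "wd s = - \<beta> *\<^sub>R w s - zd s"
definition "V s = z s \<bullet> z s + w s \<bullet> w s"
definition "Vd s = 2 * (z s \<bullet> zd s) + 2 * (w s \<bullet> wd s)"
definition "h s = w s \<bullet> w s + (\<phi> s \<bullet> z s)\<^sup>2"

lemma field_along_solution:
  "estimator_sys \<beta> \<gamma> \<mu> \<phi> \<theta>s s (x s) = (wd s + zd s, zd s)"
proof -
  have e: "w s + z s = fst (x s) - \<theta>s" by (simp add: w_def z_def)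
  show ?thesis
    unfolding estimator_sys_def Let_def wd_def zd_def e by (simp add: outer_mult_vec w_def)
qed

lemma field_has_integral:
  "t0 \<le> t \<Longrightarrow> ((\<lambda>s. (wd s + zd s, zd s)) has_integral (x t - x t0)) {t0..t}"
  using solution unfolding is_solution_def field_along_solution by blast

lemma solution_eq_integral:
  "t0 \<le> t \<Longrightarrow> x t = x t0 + integral {t0..t} (\<lambda>s. (wd s + zd s, zd s))"
  using integral_unique[OF field_has_integral] by simp

lemma solution_continuous_on: "continuous_on {t0..b} x"
proof (cases "t0 \<le> b")
  case True
  then have "(\<lambda>s. (wd s + zd s, zd s)) integrable_on {t0..b}"
    by (rule has_integral_integrable[OF field_has_integral])
  then have "continuous_on {t0..b} (\<lambda>u. x t0 + integral {t0..u} (\<lambda>s. (wd s + zd s, zd s)))"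
    by (intro continuous_intros indefinite_integral_continuous_1)
  then show ?thesis
    by (rule continuous_on_eq) (auto intro: solution_eq_integral[symmetric])
qed simp

lemma z_w_continuous_on: "continuous_on {t0..b} z" "continuous_on {t0..b} w"
  unfolding z_def[abs_def] w_def[abs_def] by (intro continuous_intros solution_continuous_on)+

lemma V_continuous_on: "continuous_on {t0..b} V"
  unfolding V_def[abs_def] by (intro continuous_intros z_w_continuous_on)

lemma field_continuous:
  assumes "t0 \<le> s" "s \<notin> S" "s \<le> b"
  shows "continuous (at s within {t0..b}) (\<lambda>s. (wd s + zd s, zd s))"
proof -
  have "continuous (at s within {t0..b}) \<phi>"
    using assms t0 by (intro continuous_within_subset[OF \<phi>_continuous]) auto
  moreover have "continuous (at s within {t0..b}) x"
    using solution_continuous_on[of b] assms by (simp add: continuous_on_eq_continuous_within)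
  ultimately show ?thesis
    unfolding wd_def zd_def w_def z_def by (intro continuous_intros) (simp_all add: normaliser_nonzero)
qed

lemma solution_has_vector_derivative:
  assumes "t0 < s" "s \<notin> S"
  shows "(x has_vector_derivative (wd s + zd s, zd s)) (at s)"
proof -
  define G where "G = (\<lambda>s. (wd s + zd s, zd s))"
  have "G integrable_on {t0..s+1}"
    unfolding G_def using assms by (intro has_integral_integrable[OF field_has_integral]) auto
  then have "((\<lambda>u. integral {t0..u} G) has_vector_derivative G s) (at s within {t0..s+1})"
    using integral_has_vector_derivative_continuous_at[of G t0 "s+1" s "{}"]
      field_continuous[of s "s+1"] assms unfolding G_def by simp
  then have "((\<lambda>u. x t0 + integral {t0..u} G) has_vector_derivative G s) (at s within {t0..s+1})"
    using has_vector_derivative_add[OF has_vector_derivative_const] by fastforce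
  then have "(x has_vector_derivative G s) (at s within {t0..s+1})"
  proof (rule has_vector_derivative_transform_within[of _ _ _ _ 1])
    show "x t0 + integral {t0..u} G = x u" if "u \<in> {t0..s+1}" for u
      using that solution_eq_integral[of u] unfolding G_def by simp
  qed (use assms in auto)
  moreover have "at s within {t0..s+1} = at s" using assms by (intro at_within_interior) auto
  ultimately show ?thesis unfolding G_def by simp
qed

lemma z_w_has_vector_derivative:
  assumes "t0 < s" "s \<notin> S"
  shows "(z has_vector_derivative zd s) (at s)" and "(w has_vector_derivative wd s) (at s)"
proof -
  have dx: "(x has_derivative (\<lambda>d. d *\<^sub>R (wd s + zd s, zd s))) (at s)"
    using solution_has_vector_derivative[OF assms] by (simp add: has_vector_derivative_def)
  show "(z has_vector_derivative zd s) (at s)"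
    unfolding has_vector_derivative_def z_def[abs_def]
    by (rule has_derivative_eq_rhs[OF has_derivative_diff[OF has_derivative_snd[OF dx] has_derivative_const]])
      (simp add: fun_eq_iff)
  show "(w has_vector_derivative wd s) (at s)"
    unfolding has_vector_derivative_def w_def[abs_def]
    by (rule has_derivative_eq_rhs[OF has_derivative_diff[OF has_derivative_fst[OF dx] has_derivative_snd[OF dx]]])
      (simp add: fun_eq_iff algebra_simps)
qed

lemma V_has_vector_derivative:
  assumes "t0 < s" "s \<notin> S"
  shows "(V has_vector_derivative Vd s) (at s)"
proof -
  have dz: "(z has_derivative (\<lambda>d. d *\<^sub>R zd s)) (at s)"
    and dw: "(w has_derivative (\<lambda>d. d *\<^sub>R wd s)) (at s)"
    using z_w_has_vector_derivative[OF assms] by (simp_all add: has_vector_derivative_def)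
  show ?thesis
    unfolding has_vector_derivative_def V_def[abs_def]
    by (rule has_derivative_eq_rhs[OF has_derivative_add[OF
          has_derivative_inner[OF dz dz] has_derivative_inner[OF dw dw]]])
      (simp add: fun_eq_iff Vd_def inner_commute algebra_simps)
qed

lemma V_has_integral: "t0 \<le> a \<Longrightarrow> a \<le> b \<Longrightarrow> (Vd has_integral (V b - V a)) {a..b}"
  by (rule fundamental_theorem_of_calculus_off_S[OF t0 _ _ continuous_on_subset[OF V_continuous_on]])
    (auto intro: V_has_vector_derivative)

lemma z_has_integral: "t0 \<le> a \<Longrightarrow> a \<le> b \<Longrightarrow> (zd has_integral (z b - z a)) {a..b}"
  by (rule fundamental_theorem_of_calculus_off_S[OF t0 _ _ continuous_on_subset[OF z_w_continuous_on(1)]])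
    (auto intro: z_w_has_vector_derivative(1))

lemma integrable_along_solution:
  fixes H :: "(real^'n) \<times> ((real^'n) \<times> (real^'n)) \<Rightarrow> real"
  assumes H: "continuous_on UNIV H" and a: "t0 \<le> a"
  shows "(\<lambda>s. H (\<phi> s, x s)) integrable_on {a..b}"
proof (cases "a \<le> b")
  case True
  obtain r where r: "\<And>s. s \<in> {t0..b} \<Longrightarrow> norm (x s) \<le> r"
    using compact_imp_bounded[OF compact_continuous_image[OF solution_continuous_on compact_Icc]]
      bounded_iff by (metis image_eqI)
  obtain B where B: "\<And>p q. norm p \<le> M \<Longrightarrow> norm q \<le> r \<Longrightarrow> \<bar>H (p, q)\<bar> \<le> B"
    using continuous_bounded_on_cball_Times[OF H] by blast
  show ?thesis
  proof (rule integrable_on_bounded_continuous_off_finite[OF S_finite[of b]])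
    have "continuous_on ({a..b} - S \<inter> {0..b}) (\<lambda>s. (\<phi> s, x s))"
    proof (intro continuous_intros)
      show "continuous_on ({a..b} - S \<inter> {0..b}) \<phi>"
        using \<phi>_continuous_on[of a b] a t0 by simp
      show "continuous_on ({a..b} - S \<inter> {0..b}) x"
        by (rule continuous_on_subset[OF solution_continuous_on[of b]]) (use a in auto)
    qed
    then show "continuous_on ({a..b} - S \<inter> {0..b}) (\<lambda>s. H (\<phi> s, x s))"
      by (rule continuous_on_compose2[OF H]) auto
    show "\<bar>H (\<phi> s, x s)\<bar> \<le> B" if "s \<in> {a..b}" for s
      using that a t0 by (intro B \<phi>_bounded r) auto
  qed
qed (simp add: integrable_on_empty)

lemma h_integrable: "t0 \<le> a \<Longrightarrow> h integrable_on {a..b}"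
  using integrable_along_solution[of "\<lambda>y. (fst (snd y) - snd (snd y)) \<bullet> (fst (snd y) - snd (snd y))
      + (fst y \<bullet> (snd (snd y) - \<theta>s))\<^sup>2"]
  by (simp add: h_def[abs_def] w_def z_def continuous_intros)

lemma w_inner_integrable: "t0 \<le> a \<Longrightarrow> (\<lambda>s. w s \<bullet> w s) integrable_on {a..b}"
  using integrable_along_solution[of "\<lambda>y. (fst (snd y) - snd (snd y)) \<bullet> (fst (snd y) - snd (snd y))"]
  by (simp add: w_def continuous_intros)

lemma zd_norm_integrable:
  assumes "t0 \<le> a"
  shows "(\<lambda>s. norm (zd s)) integrable_on {a..b}"
    and "(\<lambda>s. (norm (zd s))\<^sup>2) integrable_on {a..b}"
proof -
  define Z :: "(real^'n) \<times> ((real^'n) \<times> (real^'n)) \<Rightarrow> real^'n"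
    where "Z y = (- (\<gamma> / (1 + \<mu> * (fst y \<bullet> fst y))) * (fst y \<bullet> (fst (snd y) - \<theta>s))) *\<^sub>R fst y" for y
  have zd: "zd = (\<lambda>s. Z (\<phi> s, x s))"
    by (simp add: fun_eq_iff zd_def w_def z_def Z_def)
  have Z: "continuous_on UNIV Z"
    unfolding Z_def by (intro continuous_intros; simp add: normaliser_nonzero)
  show "(\<lambda>s. norm (zd s)) integrable_on {a..b}"
    unfolding zd by (rule integrable_along_solution[OF _ assms]) (intro continuous_intros Z)
  show "(\<lambda>s. (norm (zd s))\<^sup>2) integrable_on {a..b}"
    unfolding zd by (rule integrable_along_solution[OF _ assms]) (intro continuous_intros Z)
qed

lemma Vd_le_dissipation:
  assumes s: "s \<ge> 0"
  shows "Vd s \<le> - dissipation * h s"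
proof -
  define p q a b WW where "p = \<phi> s" and "q = \<gamma> / (1 + \<mu> * (p \<bullet> p))"
    and "a = p \<bullet> z s" and "b = p \<bullet> w s" and "WW = w s \<bullet> w s"
  have N1: "1 + \<mu> * (p \<bullet> p) \<ge> 1" using \<mu> by simp
  have q: "q > 0" unfolding q_def using \<gamma> N1 by simp
  have WW: "WW \<ge> 0" unfolding WW_def by simp
  have Vd: "Vd s = - 2 * (\<beta> * WW) + 2 * (q * b\<^sup>2) - 2 * (q * a\<^sup>2)"
    unfolding Vd_def wd_def zd_def WW_def a_def b_def q_def p_def
    by (simp add: inner_add_right inner_diff_right power2_eq_square algebra_simps inner_commute)
  have "q * (p \<bullet> p) = (\<gamma> / \<mu>) * (\<mu> * (p \<bullet> p) / (1 + \<mu> * (p \<bullet> p)))"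
    unfolding q_def using \<mu> by simp
  also have "\<dots> \<le> \<gamma> / \<mu>"
    by (intro mult_right_le_one_le) (use \<gamma> \<mu> normaliser_pos[of p] in \<open>auto simp: divide_le_eq\<close>)
  finally have "q * (p \<bullet> p) \<le> \<gamma> / \<mu>" .
  \<comment> \<open>this is where \<open>\<beta> \<ge> 2\<gamma>/\<mu>\<close> enters: the term \<open>q b\<^sup>2\<close> coming from \<open>\<phi>\<^sup>T w\<close> is at most \<open>\<beta>/2 |w|\<^sup>2\<close>\<close>
  then have "q * b\<^sup>2 \<le> (\<gamma> / \<mu>) * WW"
    using mult_left_mono[OF Cauchy_Schwarz_ineq[of p "w s"] less_imp_le[OF q]]
      mult_right_mono[of _ _ WW] WW
    unfolding b_def WW_def by (smt (verit) mult.assoc)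
  moreover have "2 * ((\<gamma> / \<mu>) * WW) \<le> \<beta> * WW"
    using mult_right_mono[OF \<beta>_ge WW] by simp
  moreover have "\<gamma> / (1 + \<mu> * M\<^sup>2) \<le> q"
    unfolding q_def p_def using \<gamma> \<mu> N1 inner_\<phi>_le[OF s]
    by (intro divide_left_mono) (auto simp: add_pos_nonneg p_def)
  then have "\<gamma> / (1 + \<mu> * M\<^sup>2) * a\<^sup>2 \<le> q * a\<^sup>2" by (rule mult_right_mono) simp
  moreover have "dissipation * WW \<le> \<beta> * WW"
    unfolding dissipation_def using WW by (simp add: mult_right_mono)
  moreover have "dissipation * a\<^sup>2 \<le> 2 * (\<gamma> / (1 + \<mu> * M\<^sup>2) * a\<^sup>2)"
    using mult_right_mono[of dissipation "2 * \<gamma> / (1 + \<mu> * M\<^sup>2)" "a\<^sup>2"]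
    unfolding dissipation_def by simp
  moreover have "- dissipation * h s = - (dissipation * WW) - dissipation * a\<^sup>2"
    unfolding h_def WW_def a_def p_def by (simp add: algebra_simps)
  ultimately show ?thesis unfolding Vd by linarith
qed

lemma zd_inner_le_drift:
  assumes s: "s \<ge> 0"
  shows "zd s \<bullet> zd s \<le> drift_bound * h s"
proof -
  define p q a b WW where "p = \<phi> s" and "q = \<gamma> / (1 + \<mu> * (p \<bullet> p))"
    and "a = p \<bullet> z s" and "b = p \<bullet> w s" and "WW = w s \<bullet> w s"
  have pp: "p \<bullet> p \<le> M\<^sup>2" unfolding p_def using inner_\<phi>_le[OF s] .
  have N1: "1 + \<mu> * (p \<bullet> p) \<ge> 1" using \<mu> by simp
  have q2: "q\<^sup>2 \<le> \<gamma>\<^sup>2"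
    unfolding q_def by (intro power_mono) (use \<gamma> N1 normaliser_pos[of p] in \<open>auto simp: divide_le_eq\<close>)
  have WW: "WW \<ge> 0" unfolding WW_def by simp
  have zz: "zd s \<bullet> zd s = q\<^sup>2 * (b + a)\<^sup>2 * (p \<bullet> p)"
    unfolding zd_def q_def a_def b_def p_def by (simp add: inner_add_right power2_eq_square algebra_simps)
  have "b\<^sup>2 \<le> M\<^sup>2 * WW"
    using Cauchy_Schwarz_ineq[of p "w s"] mult_right_mono[OF pp WW] unfolding b_def WW_def by linarith
  then have ab: "(b + a)\<^sup>2 \<le> 2 * a\<^sup>2 + 2 * (M\<^sup>2 * WW)" using square_add_le[of b a] by linarith
  have "zd s \<bullet> zd s \<le> \<gamma>\<^sup>2 * (2 * a\<^sup>2 + 2 * (M\<^sup>2 * WW)) * M\<^sup>2"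
    unfolding zz using WW by (intro mult_mono q2 ab pp) auto
  also have "\<dots> = 2 * \<gamma>\<^sup>2 * M\<^sup>2 * (a\<^sup>2 + M\<^sup>2 * WW)" by (simp add: algebra_simps)
  also have "\<dots> \<le> 2 * \<gamma>\<^sup>2 * M\<^sup>2 * ((1 + M\<^sup>2) * (WW + a\<^sup>2))"
    using WW by (intro mult_left_mono) (simp_all add: algebra_simps)
  also have "\<dots> = drift_bound * h s"
    unfolding drift_bound_def h_def WW_def a_def p_def by (simp add: algebra_simps)
  finally show ?thesis .
qed

lemma V_decrease:
  assumes "t0 \<le> a" "a \<le> b"
  shows "V b \<le> V a - dissipation * integral {a..b} h"
proof -
  have "V b - V a \<le> integral {a..b} h * (- dissipation)"
  proof (rule has_integral_le[OF V_has_integral[OF assms]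
        has_integral_mult_left[OF integrable_integral[OF h_integrable[OF assms(1)]]]])
    show "Vd s \<le> h s * - dissipation" if "s \<in> {a..b}" for s
      using Vd_le_dissipation[of s] that assms t0 by (simp add: mult.commute)
  qed
  then show ?thesis by (simp add: algebra_simps)
qed

lemma h_nonneg: "h s \<ge> 0"
  unfolding h_def by simp

lemma V_nonneg: "V s \<ge> 0"
  unfolding V_def by simp

lemma integral_h_nonneg: "t0 \<le> a \<Longrightarrow> integral {a..b} h \<ge> 0"
  by (rule integral_nonneg[OF h_integrable]) (simp_all add: h_nonneg)

lemma V_antimono: "t0 \<le> a \<Longrightarrow> a \<le> b \<Longrightarrow> V b \<le> V a"
  using V_decrease[of a b] integral_h_nonneg[of a b] dissipation_pos
  by (smt (verit) mult_nonneg_nonneg)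

lemma z_variation_le:
  assumes t: "t0 \<le> t" and s: "s \<in> {t..t+T}"
  shows "(z t - z s) \<bullet> (z t - z s) \<le> T * drift_bound * integral {t..t+T} h"
proof -
  have "norm (z s - z t) = norm (integral {t..s} zd)"
    using z_has_integral[of t s] t s by (simp add: integral_unique)
  also have "\<dots> \<le> integral {t..s} (\<lambda>r. norm (zd r))"
    by (rule integral_norm_bound_integral[OF has_integral_integrable[OF z_has_integral]
          zd_norm_integrable(1)]) (use t s in auto)
  also have "\<dots> \<le> integral {t..t+T} (\<lambda>r. norm (zd r))"
    by (rule integral_subset_le) (use s t in \<open>auto intro: zd_norm_integrable\<close>)
  finally have "(norm (z t - z s))\<^sup>2 \<le> (integral {t..t+T} (\<lambda>r. norm (zd r)))\<^sup>2"
    by (simp add: norm_minus_commute power_mono)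
  \<comment> \<open>Cauchy-Schwarz turns the pointwise bound on \<open>|z'|\<^sup>2\<close> into one on the total variation\<close>
  also have "\<dots> \<le> T * integral {t..t+T} (\<lambda>r. (norm (zd r))\<^sup>2)"
    using integral_square_le[OF zd_norm_integrable[OF t], of "t + T"] T by simp
  also have "\<dots> \<le> T * integral {t..t+T} (\<lambda>r. drift_bound * h r)"
    using t t0 zd_inner_le_drift
    by (intro mult_left_mono integral_le zd_norm_integrable integrable_on_mult_right h_integrable)
      (auto simp: power2_norm_eq_inner less_imp_le[OF T])
  finally show ?thesis by (simp add: power2_norm_eq_inner mult.assoc)
qed

lemma excitation_bounds_z:
  assumes t: "t0 \<le> t"
  shows "\<delta> * (z t \<bullet> z t) \<le> (2 + 2 * M\<^sup>2 * T\<^sup>2 * drift_bound) * integral {t..t+T} h"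
proof -
  define I where "I = integral {t..t+T} h"
  define D where "D = T * drift_bound * I"
  have t': "0 \<le> t" using t t0 by simp
  have hI: "(h has_integral I) {t..t+T}"
    unfolding I_def by (rule integrable_integral[OF h_integrable[OF t]])
  have bound: "((\<lambda>s. 2 * h s + 2 * M\<^sup>2 * D) has_integral (2 * I + 2 * M\<^sup>2 * D * T)) {t..t+T}"
    using has_integral_add[OF has_integral_mult_right[OF hI, of 2]
        has_integral_const_real[of "2 * M\<^sup>2 * D" t "t+T"]] T
    by (simp add: algebra_simps)
  have "\<delta> * (z t \<bullet> z t) \<le> integral {t..t+T} (\<lambda>s. (\<phi> s \<bullet> z t)\<^sup>2)"
    by (rule excitation_quadratic(2)[OF t'])
  \<comment> \<open>on the window \<open>z\<close> stays within \<open>\<surd>D\<close> of \<open>z t\<close>, so \<open>\<phi>\<^sup>T z t\<close> is controlled by \<open>h\<close>\<close>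
  also have "\<dots> \<le> 2 * I + 2 * M\<^sup>2 * D * T"
  proof (rule has_integral_le[OF integrable_integral[OF excitation_quadratic(1)[OF t']] bound])
    fix s assume s: "s \<in> {t..t+T}"
    have "(\<phi> s \<bullet> z t)\<^sup>2 = (\<phi> s \<bullet> z s + \<phi> s \<bullet> (z t - z s))\<^sup>2" by (simp add: inner_diff_right)
    also have "\<dots> \<le> 2 * (\<phi> s \<bullet> z s)\<^sup>2 + 2 * (\<phi> s \<bullet> (z t - z s))\<^sup>2" by (rule square_add_le)
    also have "(\<phi> s \<bullet> z s)\<^sup>2 \<le> h s" unfolding h_def by simp
    also have "(\<phi> s \<bullet> (z t - z s))\<^sup>2 \<le> (\<phi> s \<bullet> \<phi> s) * ((z t - z s) \<bullet> (z t - z s))"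
      by (rule Cauchy_Schwarz_ineq)
    also have "\<dots> \<le> M\<^sup>2 * D"
      using inner_\<phi>_le[of s] z_variation_le[OF t s] s t' unfolding D_def I_def
      by (intro mult_mono) auto
    finally show "(\<phi> s \<bullet> z t)\<^sup>2 \<le> 2 * h s + 2 * M\<^sup>2 * D" by simp
  qed
  also have "\<dots> = (2 + 2 * M\<^sup>2 * T\<^sup>2 * drift_bound) * I"
    unfolding D_def by (simp add: power2_eq_square algebra_simps)
  finally show ?thesis unfolding I_def .
qed

lemma V_window_bound:
  assumes t: "t0 \<le> t"
  shows "T * V (t + T) \<le> 2 * T * (z t \<bullet> z t) + (2 * T\<^sup>2 * drift_bound + 1) * integral {t..t+T} h"
proof -
  define I where "I = integral {t..t+T} h"
  define D where "D = T * drift_bound * I"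
  have bound: "((\<lambda>s. (2 * (z t \<bullet> z t) + 2 * D) + w s \<bullet> w s) has_integral
      (T * (2 * (z t \<bullet> z t) + 2 * D) + integral {t..t+T} (\<lambda>s. w s \<bullet> w s))) {t..t+T}"
    using has_integral_add[OF has_integral_const_real[of "2 * (z t \<bullet> z t) + 2 * D" t "t+T"]
        integrable_integral[OF w_inner_integrable[OF t]]] T
    by (simp add: algebra_simps)
  have "T * V (t + T) \<le> T * (2 * (z t \<bullet> z t) + 2 * D) + integral {t..t+T} (\<lambda>s. w s \<bullet> w s)"
  proof (rule has_integral_le[OF _ bound])
    show "((\<lambda>s. V (t + T)) has_integral T * V (t + T)) {t..t+T}"
      using has_integral_const_real[of "V (t + T)" t "t+T"] T by simp
    fix s assume s: "s \<in> {t..t+T}"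
    have "V (t + T) \<le> V s" using s t by (intro V_antimono) auto
    also have "\<dots> = z s \<bullet> z s + w s \<bullet> w s" by (simp add: V_def)
    also have "z s \<bullet> z s \<le> 2 * (z t \<bullet> z t) + 2 * ((z s - z t) \<bullet> (z s - z t))"
      by (rule inner_self_le_split)
    also have "(z s - z t) \<bullet> (z s - z t) = (z t - z s) \<bullet> (z t - z s)"
      by (simp add: inner_commute inner_diff algebra_simps)
    also have "\<dots> \<le> D" unfolding D_def I_def by (rule z_variation_le[OF t s])
    finally show "V (t + T) \<le> (2 * (z t \<bullet> z t) + 2 * D) + w s \<bullet> w s" by simp
  qed
  also have "integral {t..t+T} (\<lambda>s. w s \<bullet> w s) \<le> I"
    unfolding I_def by (rule integral_le[OF w_inner_integrable[OF t] h_integrable[OF t]]) (simp add: h_def)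
  finally show ?thesis
    unfolding D_def I_def by (simp add: power2_eq_square algebra_simps)
qed

lemma V_contraction:
  assumes t: "t0 \<le> t"
  shows "V (t + T) \<le> exp (- contraction_exponent) * V t"
proof -
  define I where "I = integral {t..t+T} h"
  have "2 * T * (z t \<bullet> z t) \<le> 2 * T * ((2 + 2 * M\<^sup>2 * T\<^sup>2 * drift_bound) * I / \<delta>)"
    using excitation_bounds_z[OF t] T \<delta> unfolding I_def
    by (intro mult_left_mono) (simp_all add: pos_le_divide_eq mult.commute)
  then have "T * V (t + T) \<le> window_const * I"
    using V_window_bound[OF t] unfolding window_const_def I_def
    by (simp add: field_simps)
  moreover have "dissipation * I \<le> V t - V (t + T)"
    using V_decrease[of t "t + T"] t T unfolding I_def by simp
  ultimately have "dissipation * (T * V (t + T)) \<le> window_const * (V t - V (t + T))"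
    using dissipation_pos window_const_pos
    by (smt (verit) mult_left_mono mult.left_commute)
  then have "V (t + T) * (window_const + dissipation * T) \<le> window_const * V t"
    by (simp add: algebra_simps)
  then show ?thesis
    unfolding exp_minus_contraction_exponent
    using window_const_pos dissipation_pos T by (simp add: pos_le_divide_eq add_pos_pos)
qed

lemma V_equivalent_norm_deviation:
  shows "(norm (x s - (\<theta>s, \<theta>s)))\<^sup>2 \<le> 3 * V s"
    and "V s \<le> 3 * (norm (x s - (\<theta>s, \<theta>s)))\<^sup>2"
proof -
  define u where "u = fst (x s) - \<theta>s"
  have "x s - (\<theta>s, \<theta>s) = (u, z s)" by (simp add: u_def z_def prod_eq_iff)
  then have norm_eq: "(norm (x s - (\<theta>s, \<theta>s)))\<^sup>2 = u \<bullet> u + z s \<bullet> z s"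
    by (simp add: power2_norm_eq_inner inner_Pair)
  have V_eq: "V s = z s \<bullet> z s + (u - z s) \<bullet> (u - z s)"
    unfolding V_def u_def z_def w_def by simp
  show "(norm (x s - (\<theta>s, \<theta>s)))\<^sup>2 \<le> 3 * V s"
    unfolding norm_eq V_eq by (rule sum_squares_le_3_times_split(1))
  show "V s \<le> 3 * (norm (x s - (\<theta>s, \<theta>s)))\<^sup>2"
    unfolding norm_eq V_eq by (rule sum_squares_le_3_times_split(2))
qed

lemma norm_deviation_exponential_bound:
  assumes t: "t0 \<le> t"
  defines "L \<equiv> contraction_exponent"
  shows "norm (x t - (\<theta>s, \<theta>s))
    \<le> 3 * exp (L / 2) * norm (x t0 - (\<theta>s, \<theta>s)) * exp (- (L / (2 * T) * (t - t0)))"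
proof (rule power2_le_imp_le)
  define n0 where "n0 = norm (x t0 - (\<theta>s, \<theta>s))"
  define E where "E = exp (- (L * ((t - t0) / T)))"
  have "(norm (x t - (\<theta>s, \<theta>s)))\<^sup>2 \<le> 3 * V t" by (rule V_equivalent_norm_deviation(1))
  also have "\<dots> \<le> 3 * (exp L * E * V t0)"
    using exponential_decay_of_periodic_contraction[where V = V, OF T
        less_imp_le[OF contraction_exponent_pos] V_nonneg V_antimono V_contraction t]
    unfolding E_def L_def by simp
  also have "\<dots> \<le> 3 * (exp L * E * (3 * n0\<^sup>2))"
    unfolding n0_def using V_equivalent_norm_deviation(2)[of t0]
    by (intro mult_left_mono) (auto simp: E_def)
  also have "\<dots> = (3 * exp (L / 2) * n0 * exp (- (L / (2 * T) * (t - t0))))\<^sup>2"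
  proof -
    have "(exp (L / 2))\<^sup>2 = exp L" by (simp add: power2_eq_square exp_add[symmetric])
    moreover have "2 * (- (L / (2 * T) * (t - t0))) = - (L * ((t - t0) / T))"
      using T by (simp add: field_simps)
    then have "(exp (- (L / (2 * T) * (t - t0))))\<^sup>2 = E"
      unfolding E_def by (simp only: exp_double[symmetric])
    ultimately show ?thesis by (simp add: power_mult_distrib algebra_simps)
  qed
  finally show "(norm (x t - (\<theta>s, \<theta>s)))\<^sup>2
      \<le> (3 * exp (L / 2) * norm (x t0 - (\<theta>s, \<theta>s)) * exp (- (L / (2 * T) * (t - t0))))\<^sup>2"
    unfolding n0_def .
qed simp

end

theorem theorem2:
  fixes \<phi> :: "real \<Rightarrow> real ^ 'n" and \<theta>s :: "real ^ 'n"
    and \<beta> \<gamma> \<mu> :: real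
  assumes "piecewise_continuous \<phi>"
    and "persistently_exciting \<phi>"
    and "\<beta> > 0" and "\<gamma> > 0" and "\<mu> > 0"
    and "\<beta> \<ge> 2 * \<gamma> / \<mu>"
  shows "UGAS (estimator_sys \<beta> \<gamma> \<mu> \<phi> \<theta>s) (\<theta>s, \<theta>s)"
proof -
  obtain S where "\<And>b. finite (S \<inter> {0..b})"
    and "\<And>t. t \<in> {0..} - S \<Longrightarrow> continuous (at t within {0..}) \<phi>"
    using assms(1) unfolding piecewise_continuous_def by blast
  moreover obtain M T \<delta> where "M > 0" "T > 0" "\<delta> > 0" "\<And>t. t \<ge> 0 \<Longrightarrow> norm (\<phi> t) \<le> M"
    "\<And>t. t \<ge> 0 \<Longrightarrow> mat_ge (integral {t..t+T} (\<lambda>s. outer (\<phi> s))) (\<delta> *\<^sub>R mat 1)"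
    using assms(2) unfolding persistently_exciting_def by blast
  ultimately interpret estimator_setting \<phi> \<theta>s \<beta> \<gamma> \<mu> M T \<delta> S
    using assms(3-6) by unfold_locales auto
  define L where "L = contraction_exponent"
  show ?thesis
    unfolding UGAS_def
  proof (intro exI conjI allI impI)
    show "classKL (\<lambda>r s. 3 * exp (L / 2) * r * exp (- (L / (2 * T) * s)))"
      using contraction_exponent_pos T unfolding L_def by (intro classKL_exponential) auto
    fix t0 x t
    assume "0 \<le> t0" "is_solution (estimator_sys \<beta> \<gamma> \<mu> \<phi> \<theta>s) t0 x" "t0 \<le> t"
    then interpret estimator_solution \<phi> \<theta>s \<beta> \<gamma> \<mu> M T \<delta> S t0 x
      by unfold_locales
    show "norm (x t - (\<theta>s, \<theta>s)) \<le> 3 * exp (L / 2) * norm (x t0 - (\<theta>s, \<theta>s)) * exp (- (L / (2 * T) * (t - t0)))"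
      unfolding L_def by (rule norm_deviation_exponential_bound[OF \<open>t0 \<le> t\<close>])
  qed
qed

end
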